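(* $\mathfrak{s}(2^\omega)$ is uncountable.
   Context: For infinite sets $U, A$, say $U$ splits $A$ if both $A\cap U$ and $A\setminus U$ are infinite. For a topological space $X$, $\mathfrak{s}(X)$ is the smallest cardinality of a family $\mathcal{U}$ of open subsets of $X$ such that every infinite $A\subseteq X$ is split by some $U\in\mathcal{U}$. $2^\omega$ is the Cantor space. *)

theory Defs
  imports "HOL-Analysis.Analysis"
begin

definition splits :: "'a set \<Rightarrow> 'a set \<Rightarrow> bool" where
  "splits U A \<longleftrightarrow> infinite (A \<inter> U) \<and> infinite (A - U)"

definition splitting_family :: "'a topology \<Rightarrow> 'a set set \<Rightarrow> bool" where
  "splitting_family X \<U> \<longleftrightarrow>
     (\<forall>U\<in>\<U>. openin X U) \<and>
     (\<forall>A. A \<subseteq> topspace X \<and> infinite A \<longrightarrow> (\<exists>U\<in>\<U>. splits U A))"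

definition cantor_space :: "(nat \<Rightarrow> bool) topology" where
  "cantor_space = product_topology (\<lambda>_. discrete_topology (UNIV :: bool set)) UNIV"

end

theory Submission
  imports Defs
begin

text \<open>
  Every infinite \<open>A \<subseteq> 2\<^sup>\<omega>\<close> is split by an open set: either some coordinate takes both
  values infinitely often on \<open>A\<close>, or \<open>A\<close> converges coordinatewise to a point \<open>y\<close>; in the
  latter case the index of the first disagreement with \<open>y\<close> takes infinitely many values on
  \<open>A\<close>, and splitting this set of indices into two infinite halves gives an open splitter.

  Conversely, given open sets \<open>u\<^sub>0, u\<^sub>1, \<dots>\<close> in a \<open>T\<^sub>1\<close> space without isolated points, choose
  nonempty open sets \<open>C\<^sub>0 \<supseteq> C\<^sub>1 \<supseteq> \<dots>\<close> with \<open>C\<^sub>k\<^sub>+\<^sub>1\<close> inside or disjoint from \<open>u\<^sub>k\<close>, and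
  points \<open>x\<^sub>k \<in> C\<^sub>k - C\<^sub>k\<^sub>+\<^sub>1\<close>. All but finitely many \<open>x\<^sub>j\<close> lie in \<open>C\<^sub>k\<^sub>+\<^sub>1\<close>, so no \<open>u\<^sub>k\<close> splits
  the infinite set \<open>{x\<^sub>k}\<close>.
\<close>

lemma splits_mono: "splits U B \<Longrightarrow> B \<subseteq> A \<Longrightarrow> splits U A"
  unfolding splits_def by (meson Diff_mono Int_mono infinite_super order_refl)

lemma splits_vimage:
  assumes "splits S (f ` A)"
  shows "splits (f -` S) A"
proof -
  have "f ` (A \<inter> f -` S) = f ` A \<inter> S" "f ` (A - f -` S) = f ` A - S"
    by auto
  with assms show ?thesis
    unfolding splits_def by (metis finite_imageI)
qed

lemma infinite_imp_splits:
  assumes "infinite D"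
  shows "\<exists>S. splits S D"
proof -
  obtain f :: "nat \<Rightarrow> _" where f: "inj f" "range f \<subseteq> D"
    using infinite_countable_subset[OF assms] by blast
  define S where "S = range (\<lambda>k. f (2 * k))"
  have "inj (\<lambda>k. f (2 * k))" "inj (\<lambda>k. f (2 * k + 1))"
    using f(1) by (auto intro!: injI dest!: injD)
  then have "infinite S" "infinite (range (\<lambda>k. f (2 * k + 1)))"
    unfolding S_def by (auto dest: range_inj_infinite)
  moreover have "D \<inter> S = S" "range (\<lambda>k. f (2 * k + 1)) \<subseteq> D - S"
    using f(2) unfolding S_def by (auto dest!: injD[OF f(1)]) presburger
  ultimately show ?thesis
    unfolding splits_def by (metis infinite_super)
qed

lemma not_splits_if_cofinite_decided:
  assumes "finite (A - C)" "C \<subseteq> U \<or> C \<inter> U = {}"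
  shows "\<not> splits U A"
proof -
  have "A - U \<subseteq> A - C \<or> A \<inter> U \<subseteq> A - C"
    using assms(2) by blast
  then show ?thesis
    unfolding splits_def using assms(1) finite_subset by blast
qed

lemma exists_open_subset_inside_or_disjoint:
  assumes "t1_space X" "\<And>a. \<not> openin X {a}"
    and "openin X C" "C \<noteq> {}" "openin X U"
  obtains C' where "openin X C'" "C' \<noteq> {}" "C' \<subseteq> C" "C' \<subseteq> U \<or> C' \<inter> U = {}" "C - C' \<noteq> {}"
proof -
  obtain V where V: "openin X V" "V \<noteq> {}" "V \<subseteq> C" "V \<subseteq> U \<or> V \<inter> U = {}"
  proof (cases "C \<inter> U = {}")
    case True
    then show ?thesis
      using that assms(3,4) by blast
  next
    case False
    then show ?thesis
      using that[of "C \<inter> U"] assms(3,5) by blast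
  qed
  then obtain a where "a \<in> V"
    by blast
  moreover have "V \<noteq> {a}"
    using V(1) assms(2) by auto
  ultimately obtain b where "a \<in> V" "b \<in> V" "a \<noteq> b"
    by blast
  moreover have "openin X (V - {b})"
    by (meson V(1) assms(1) t1_space_openin_delete_alt)
  ultimately show ?thesis
    using V that[of "V - {b}"] by blast
qed

lemma exists_infinite_set_unsplit_by_sequence:
  fixes u :: "nat \<Rightarrow> 'a set"
  assumes "t1_space X" "topspace X \<noteq> {}" "\<And>a. \<not> openin X {a}"
    and u_open: "\<And>k. openin X (u k)"
  obtains A where "A \<subseteq> topspace X" "infinite A" "\<And>k. \<not> splits (u k) A"
proof -
  let ?nonempty_open = "\<lambda>C. openin X C \<and> C \<noteq> {}"
  let ?decides = "\<lambda>k C C'. C' \<subseteq> C \<and> (C' \<subseteq> u k \<or> C' \<inter> u k = {}) \<and> C - C' \<noteq> {}"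
  have "\<exists>C. \<forall>k. ?nonempty_open (C k) \<and> ?decides k (C k) (C (Suc k))"
  proof (rule dependent_nat_choice[where P="\<lambda>_. ?nonempty_open" and Q="?decides"])
    show "\<exists>C. ?nonempty_open C"
      using assms(2) openin_topspace[of X] by auto
    show "\<exists>C'. ?nonempty_open C' \<and> ?decides k C C'" if "?nonempty_open C" for C k
    proof -
      from that have "openin X C" "C \<noteq> {}"
        by auto
      then obtain C' where "openin X C'" "C' \<noteq> {}" "C' \<subseteq> C" "C' \<subseteq> u k \<or> C' \<inter> u k = {}" "C - C' \<noteq> {}"
        by (rule exists_open_subset_inside_or_disjoint[OF assms(1,3) _ _ u_open])
      then show ?thesis
        by auto
    qed
  qed
  then obtain C where C: "\<forall>k. ?nonempty_open (C k) \<and> ?decides k (C k) (C (Suc k))" ..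
  then have C_open: "\<And>k. openin X (C k) \<and> C k \<noteq> {}"
    and C_next: "\<And>k. ?decides k (C k) (C (Suc k))"
    by simp_all
  have "decseq C"
    unfolding decseq_Suc_iff using C_next by blast
  have "\<forall>k. \<exists>p. p \<in> C k - C (Suc k)"
    using C_next by blast
  then obtain x where x: "\<And>k. x k \<in> C k - C (Suc k)"
    by metis
  have later_points: "x j \<in> C (Suc k)" if "k < j" for j k
    using x[of j] decseqD[OF \<open>decseq C\<close>, of "Suc k" j] that by auto
  have "inj x"
    by (rule linorder_injI) (metis DiffD2 later_points x)
  show ?thesis
  proof
    show "range x \<subseteq> topspace X"
      using x C_open openin_subset by fastforce
    show "infinite (range x)"
      using \<open>inj x\<close> by (rule range_inj_infinite)
    fix k
    have "range x - C (Suc k) \<subseteq> x ` {..k}"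
      using later_points by (auto intro!: image_eqI simp flip: not_less)
    then show "\<not> splits (u k) (range x)"
      using C_next not_splits_if_cofinite_decided by (metis finite_atMost finite_imageI finite_subset)
  qed
qed

lemma not_countable_splitting_family:
  assumes "t1_space X" "topspace X \<noteq> {}" "\<And>a. \<not> openin X {a}" "countable \<U>"
  shows "\<not> splitting_family X \<U>"
proof
  assume splitting: "splitting_family X \<U>"
  \<comment> \<open>\<open>{}\<close> is added so that the enumeration is open-valued even when \<open>\<U> = {}\<close>.\<close>
  define u where "u = from_nat_into (insert {} \<U>)"
  have range_u: "range u = insert {} \<U>"
    unfolding u_def using assms(4) by simp
  then have "openin X (u k)" for k
    using splitting unfolding splitting_family_def by (metis insertE openin_empty rangeI)
  then obtain A where "A \<subseteq> topspace X" "infinite A" "\<And>k. \<not> splits (u k) A"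
    using exists_infinite_set_unsplit_by_sequence assms(1-3) by blast
  then show False
    using splitting range_u unfolding splitting_family_def by (metis insertCI rangeE)
qed

lemma topspace_cantor_space [simp]: "topspace cantor_space = UNIV"
  unfolding cantor_space_def by (simp add: PiE_UNIV_domain)

lemma openin_cantor_space_coordinate: "openin cantor_space {x. x n = b}"
proof -
  have "continuous_map cantor_space (discrete_topology UNIV) (\<lambda>x. x n)"
    unfolding cantor_space_def by (rule continuous_map_product_projection) simp
  from openin_continuous_map_preimage[OF this, of "{b}"]
  show ?thesis by simp
qed

lemma openin_cantor_space_cylinder: "openin cantor_space {x. \<forall>m\<le>n. x m = z m}"
proof -
  have "openin cantor_space ((\<Inter>m\<in>{..n}. {x. x m = z m}) \<inter> topspace cantor_space)"
    using openin_cantor_space_coordinate by (intro openin_INT) auto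
  moreover have "(\<Inter>m\<in>{..n}. {x. x m = z m}) \<inter> topspace cantor_space = {x. \<forall>m\<le>n. x m = z m}"
    by auto
  ultimately show ?thesis
    by metis
qed

lemma t1_space_cantor_space: "t1_space cantor_space"
  unfolding cantor_space_def
  by (simp add: Hausdorff_imp_t1_space Hausdorff_space_product_topology)

lemma not_openin_cantor_space_singleton: "\<not> openin cantor_space {a}"
proof
  assume "openin cantor_space {a}"
  then obtain U where U: "finite {i. U i \<noteq> UNIV}" "a \<in> Pi\<^sub>E UNIV U" "Pi\<^sub>E UNIV U \<subseteq> {a}"
    unfolding cantor_space_def openin_product_topology_alt by fastforce
  obtain n where "U n = UNIV"
    using U(1) ex_new_if_finite infinite_UNIV_nat by blast
  then have "a(n := \<not> a n) \<in> Pi\<^sub>E UNIV U"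
    using U(2) by (auto simp: PiE_iff)
  then show False
    using U(3) by (metis fun_upd_same singletonD subsetD)
qed

definition first_diff :: "(nat \<Rightarrow> 'a) \<Rightarrow> (nat \<Rightarrow> 'a) \<Rightarrow> nat" where
  "first_diff y x = (LEAST n. x n \<noteq> y n)"

lemma first_diff_eq_iff:
  "x \<noteq> y \<and> first_diff y x = n \<longleftrightarrow> x n \<noteq> y n \<and> (\<forall>m<n. x m = y m)"
proof (cases "x = y")
  case False
  then obtain k where "x k \<noteq> y k"
    by auto
  then show ?thesis
    unfolding first_diff_def
    by (metis (mono_tags, lifting) LeastI Least_equality linorder_not_le not_less_Least)
qed simp

lemma first_diff_eq_cylinder:
  "{x. x \<noteq> y \<and> first_diff y x = n} = {x :: nat \<Rightarrow> bool. \<forall>m\<le>n. x m = (y(n := \<not> y n)) m}"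
  unfolding first_diff_eq_iff by (auto simp: le_less)

lemma openin_cantor_space_first_diff_vimage:
  "openin cantor_space {x. x \<noteq> y \<and> first_diff y x \<in> S}"
proof -
  have "{x. x \<noteq> y \<and> first_diff y x \<in> S} = (\<Union>n\<in>S. {x. x \<noteq> y \<and> first_diff y x = n})"
    by auto
  then show ?thesis
    by (simp add: first_diff_eq_cylinder openin_cantor_space_cylinder openin_clauses(3))
qed

lemma infinite_first_diff_image:
  assumes "infinite A" "\<And>n. finite {x\<in>A. x n \<noteq> y n}"
  shows "infinite (first_diff y ` (A - {y}))"
proof
  assume fin: "finite (first_diff y ` (A - {y}))"
  have "A - {y} \<subseteq> (\<Union>n\<in>first_diff y ` (A - {y}). {x\<in>A. x n \<noteq> y n})"
    using first_diff_eq_iff[of _ y] by blast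
  then show False
    using assms fin by (meson finite_Diff2 finite_UN_I finite.emptyI finite_insert finite_subset)
qed

lemma converges_or_splits_by_coordinate:
  "(\<exists>y. \<forall>i. finite {x\<in>A. x i \<noteq> y i}) \<or> (\<exists>i. splits {x. x i} A)"
proof (rule disjCI)
  assume no_split: "\<not> (\<exists>i. splits {x. x i} A)"
  define y where "y i = infinite (A \<inter> {x. x i})" for i
  have "finite {x\<in>A. x i \<noteq> y i}" for i
  proof -
    have "{x\<in>A. x i \<noteq> y i} = (if y i then A - {x. x i} else A \<inter> {x. x i})"
      by auto
    then show ?thesis
      using no_split unfolding splits_def y_def by auto
  qed
  then show "\<exists>y. \<forall>i. finite {x\<in>A. x i \<noteq> y i}"
    by blast
qed

lemma splitting_family_cantor_space_open_sets:
  "splitting_family cantor_space {U. openin cantor_space U}"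
  unfolding splitting_family_def
proof (intro conjI ballI allI impI)
  fix A :: "(nat \<Rightarrow> bool) set"
  assume "A \<subseteq> topspace cantor_space \<and> infinite A"
  then have "infinite A"
    by blast
  from converges_or_splits_by_coordinate[of A]
  show "\<exists>U\<in>{U. openin cantor_space U}. splits U A"
  proof (elim disjE exE)
    fix y
    assume "\<forall>i. finite {x\<in>A. x i \<noteq> y i}"
    then have converges: "finite {x\<in>A. x i \<noteq> y i}" for i
      by blast
    obtain S where S: "splits S (first_diff y ` (A - {y}))"
      using infinite_imp_splits[OF infinite_first_diff_image[OF \<open>infinite A\<close> converges]] ..
    define U where "U = {x. x \<noteq> y \<and> first_diff y x \<in> S}"
    have "(A - {y}) \<inter> U = (A - {y}) \<inter> first_diff y -` S"
      "(A - {y}) - U = (A - {y}) - first_diff y -` S"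
      unfolding U_def by auto
    with splits_vimage[OF S] have "splits U (A - {y})"
      unfolding splits_def by simp
    then have "splits U A"
      using splits_mono by blast
    moreover have "openin cantor_space U"
      unfolding U_def by (rule openin_cantor_space_first_diff_vimage)
    ultimately show ?thesis
      by blast
  next
    fix i
    assume "splits {x. x i} A"
    moreover have "openin cantor_space {x. x i}"
      using openin_cantor_space_coordinate[of i True] by simp
    ultimately show ?thesis
      by blast
  qed
qed simp

theorem lemma2p4:
  shows "(\<exists>\<U>. splitting_family cantor_space \<U>) \<and>
         \<not> (\<exists>\<U>. countable \<U> \<and> splitting_family cantor_space \<U>)"
  using splitting_family_cantor_space_open_sets
    not_countable_splitting_family[OF t1_space_cantor_space _ not_openin_cantor_space_singleton]
  by auto

end
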